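(* Let $l\geq 0$ be an integer. Then $f_2(8l+i)=6l+i$ for every $i$ with $0\leq i\leq 5$, and $f_2(8l+6)=f_2(8l+7)=6l+5$.
   Context: $\Sigma_k=\{0,1,\ldots,k-1\}$. A border of a word $w$ is a non-empty word that is both a proper prefix and a proper suffix of $w$; $w$ is unbordered if it has no border. A border $u$ of $w$ is non-overlapping if $|u|\le |w|/2$. The smallest BP-factorization of a word $w$ is the factorization $w=w_m\cdots w_1w_0w_1\cdots w_m$ ($m\ge 0$) in which, for each $i\ge 1$, $w_i$ is the longest non-overlapping border of $w_i\cdots w_1w_0w_1\cdots w_i$, and $w_0$ is either empty or unbordered (i.e., one repeatedly removes the longest non-overlapping border from both ends until an empty or unbordered central word remains). Its width is $2m+1$ if $w_0$ is non-empty and $2m$ if $w_0$ is empty. $f_k(n)$ denotes the maximum width of the smallest BP-factorization over all length-$n$ words over $\Sigma_k$. *)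

theory Defs
  imports "HOL-Library.Sublist"
begin

definition is_border :: "nat list \<Rightarrow> nat list \<Rightarrow> bool" where
  "is_border u w \<longleftrightarrow> u \<noteq> [] \<and> length u < length w \<and> prefix u w \<and> suffix u w"

definition unbordered :: "nat list \<Rightarrow> bool" where
  "unbordered w \<longleftrightarrow> \<not> (\<exists>u. is_border u w)"

definition lnob :: "nat list \<Rightarrow> nat" where
  "lnob w = Max (length ` {u. is_border u w \<and> 2 * length u \<le> length w})"

definition bp_mid :: "nat list \<Rightarrow> nat list" where
  "bp_mid w = drop (lnob w) (take (length w - lnob w) w)"

text \<open>bp_rel w m: the smallest BP-factorization of w has width m.\<close>
inductive bp_rel :: "nat list \<Rightarrow> nat \<Rightarrow> bool" where
  bp_empty: "bp_rel [] 0"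
| bp_unb: "w \<noteq> [] \<Longrightarrow> unbordered w \<Longrightarrow> bp_rel w 1"
| bp_step: "w \<noteq> [] \<Longrightarrow> \<not> unbordered w \<Longrightarrow> bp_rel (bp_mid w) m \<Longrightarrow> bp_rel w (m + 2)"

definition bp_width :: "nat list \<Rightarrow> nat" where
  "bp_width w = (THE m. bp_rel w m)"

definition f :: "nat \<Rightarrow> nat \<Rightarrow> nat" where
  "f k n = Max {bp_width w | w. length w = n \<and> set w \<subseteq> {0..<k}}"

end

theory Submission
  imports Defs
begin

(* Write n = 8 q + r with r < 8. A BP step that removes a border of length k from both ends
   adds 2 to the width and consumes 2 k letters, so the width is large only if most borders
   have length 1. For a binary word three consecutive steps cannot all remove single letters:
   then w = a b c u c b a, and two of a, b, c coincide, giving w a non-overlapping border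
   a a or a b a, or its centre b c u c b the border b b. Induction on the length then bounds
   the width by 6 q + min r 5. Conversely, wrapping a suitable word x as 0101 x 0110 peels
   off 0, 1 and 01 in three steps and adds 6 to the width; iterating this q times on a seed
   of length r and width min r 5 attains the bound. *)

section \<open>Non-overlapping borders\<close>

definition nob_lengths :: "nat list \<Rightarrow> nat set" where
  "nob_lengths w = {k. 0 < k \<and> 2 * k \<le> length w \<and> take k w = drop (length w - k) w}"

lemma is_border_iff_take_drop:
  "is_border u w \<longleftrightarrow>
     u \<noteq> [] \<and> length u < length w \<and> take (length u) w = u \<and> drop (length w - length u) w = u"
proof -
  have "prefix u w \<longleftrightarrow> length u \<le> length w \<and> take (length u) w = u"
    by (auto simp: prefix_def) (metis append_take_drop_id)
  moreover have "suffix u w \<longleftrightarrow> length u \<le> length w \<and> drop (length w - length u) w = u"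
    by (auto simp: suffix_def) (metis append_take_drop_id)
  ultimately show ?thesis
    unfolding is_border_def by auto
qed

lemma lnob_eq_Max: "lnob w = Max (nob_lengths w)"
proof -
  have "length ` {u. is_border u w \<and> 2 * length u \<le> length w} = nob_lengths w"
  proof (intro equalityI subsetI)
    fix k assume "k \<in> nob_lengths w"
    then have "take k w \<in> {u. is_border u w \<and> 2 * length u \<le> length w}" "length (take k w) = k"
      by (auto simp: nob_lengths_def is_border_iff_take_drop)
    then show "k \<in> length ` {u. is_border u w \<and> 2 * length u \<le> length w}"
      by (metis image_eqI)
  qed (auto simp: nob_lengths_def is_border_iff_take_drop)
  then show ?thesis
    by (simp add: lnob_def)
qed

lemma finite_nob_lengths: "finite (nob_lengths w)"
  by (rule finite_subset[of _ "{..length w}"]) (auto simp: nob_lengths_def)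

lemma take_eq_drop_iff_nth:
  "k \<le> length w \<Longrightarrow> take k w = drop (length w - k) w \<longleftrightarrow> (\<forall>j<k. w ! j = w ! (length w - k + j))"
  by (auto simp: list_eq_iff_nth_eq)

(* An overlapping border of length k makes w periodic with period length w - k. *)
lemma overlapping_border_shrink:
  assumes border: "take k w = drop (length w - k) w" and "length w < 2 * k" "k < length w"
  shows "take (2 * k - length w) w = drop (length w - (2 * k - length w)) w"
proof -
  let ?p = "length w - k"
  have period: "w ! j = w ! (?p + j)" if "j < k" for j
    using border that assms(3) take_eq_drop_iff_nth[of k w] by auto
  have "w ! j = w ! (length w - (2 * k - length w) + j)" if "j < 2 * k - length w" for j
  proof -
    have "j < k" "?p + j < k"
      using that assms(2,3) by linarith+
    then have "w ! j = w ! (?p + j)" "w ! (?p + j) = w ! (?p + (?p + j))"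
      using period by blast+
    moreover have "length w - (2 * k - length w) + j = ?p + (?p + j)"
      using assms(2,3) by simp
    ultimately show ?thesis by (simp only:)
  qed
  then show ?thesis
    using assms(2,3) take_eq_drop_iff_nth[of "2 * k - length w" w] by simp
qed

lemma nob_lengths_nonempty:
  "0 < k \<Longrightarrow> k < length w \<Longrightarrow> take k w = drop (length w - k) w \<Longrightarrow> nob_lengths w \<noteq> {}"
proof (induction k rule: less_induct)
  case (less k)
  show ?case
  proof (cases "2 * k \<le> length w")
    case True
    with less.prems show ?thesis by (auto simp: nob_lengths_def)
  next
    case False
    with less.prems show ?thesis
      by (intro less.IH[of "2 * k - length w"] overlapping_border_shrink) auto
  qed
qed

lemma unbordered_iff_nob_lengths: "unbordered w \<longleftrightarrow> nob_lengths w = {}"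
proof
  assume "unbordered w"
  show "nob_lengths w = {}"
  proof (rule ccontr)
    assume "nob_lengths w \<noteq> {}"
    then obtain k where "k \<in> nob_lengths w" by blast
    then have "is_border (take k w) w"
      by (auto simp: nob_lengths_def is_border_iff_take_drop min_def)
    with \<open>unbordered w\<close> show False
      unfolding unbordered_def by blast
  qed
next
  assume "nob_lengths w = {}"
  show "unbordered w"
    unfolding unbordered_def is_border_iff_take_drop
  proof clarify
    fix u :: "nat list"
    assume "u \<noteq> []" "length u < length w" "take (length u) w = u" "drop (length w - length u) w = u"
    then have "nob_lengths w \<noteq> {}"
      by (intro nob_lengths_nonempty[of "length u"]) auto
    with \<open>nob_lengths w = {}\<close> show False by simp
  qed
qed

lemma unbordered_Nil: "unbordered []"
  by (auto simp: unbordered_iff_nob_lengths nob_lengths_def)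

lemma lnob_in_nob_lengths: "\<not> unbordered w \<Longrightarrow> lnob w \<in> nob_lengths w"
  unfolding lnob_eq_Max unbordered_iff_nob_lengths by (simp add: finite_nob_lengths)

lemma lnob_bounds: "\<not> unbordered w \<Longrightarrow> 0 < lnob w \<and> 2 * lnob w \<le> length w"
  using lnob_in_nob_lengths by (simp add: nob_lengths_def)

lemma le_lnob: "k \<in> nob_lengths w \<Longrightarrow> k \<le> lnob w"
  unfolding lnob_eq_Max by (simp add: finite_nob_lengths)

lemma lnob_eqI: "k \<in> nob_lengths w \<Longrightarrow> (\<And>j. j \<in> nob_lengths w \<Longrightarrow> j \<le> k) \<Longrightarrow> lnob w = k"
  unfolding lnob_eq_Max by (intro Max_eqI finite_nob_lengths)

lemma nob_lengths_eq_filter: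
  "nob_lengths w = set (filter (\<lambda>k. take k w = drop (length w - k) w) [1..<Suc (length w div 2)])"
  by (auto simp: nob_lengths_def)

lemma nob_lengths_less_suffix:
  assumes "suffix s w" "\<not> sublist s (take (length w div 2) w)" "k \<in> nob_lengths w"
  shows "k < length s"
proof (rule ccontr)
  assume "\<not> k < length s"
  have k: "2 * k \<le> length w" "take k w = drop (length w - k) w"
    using assms(3) by (auto simp: nob_lengths_def)
  have "suffix s (drop (length w - k) w)"
    using \<open>\<not> k < length s\<close> k(1) by (intro suffix_length_suffix[OF assms(1) suffix_drop]) simp
  then have "suffix s (take k w)"
    unfolding k(2) .
  then have "sublist s (take k (take (length w div 2) w))"
    using k(1) by (simp add: min_absorb1 suffix_imp_sublist)
  with assms(2) show False
    using sublist_order.order_trans sublist_take by blast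
qed

lemma length_bp_mid: "\<not> unbordered w \<Longrightarrow> length (bp_mid w) = length w - 2 * lnob w"
  using lnob_bounds[of w] by (auto simp: bp_mid_def)

lemma bp_mid_shorter: "\<not> unbordered w \<Longrightarrow> length (bp_mid w) < length w"
  using lnob_bounds[of w] length_bp_mid[of w] by linarith

lemma set_bp_mid: "set (bp_mid w) \<subseteq> set w"
  unfolding bp_mid_def by (meson order.trans set_drop_subset set_take_subset)

lemma bordered_decomp:
  assumes "\<not> unbordered w"
  shows "w = take (lnob w) w @ bp_mid w @ take (lnob w) w"
proof -
  let ?k = "lnob w" and ?n = "length w"
  have k: "2 * ?k \<le> ?n" "take ?k w = drop (?n - ?k) w"
    using lnob_in_nob_lengths[OF assms] by (auto simp: nob_lengths_def)
  have "take ?k (take (?n - ?k) w) = take ?k w"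
    using k(1) by (simp add: min_absorb1)
  then have "take (?n - ?k) w = take ?k w @ bp_mid w"
    unfolding bp_mid_def by (metis append_take_drop_id)
  then have "w = (take ?k w @ bp_mid w) @ drop (?n - ?k) w"
    by (metis append_take_drop_id)
  with k(2) show ?thesis by simp
qed

section \<open>The width recursion\<close>

lemma bp_rel_functional: "bp_rel w m \<Longrightarrow> bp_rel w m' \<Longrightarrow> m = m'"
proof (induction arbitrary: m' rule: bp_rel.induct)
  case bp_empty
  then show ?case by (cases rule: bp_rel.cases) auto
next
  case (bp_unb w)
  from bp_unb.prems show ?case by (cases rule: bp_rel.cases) (use bp_unb.hyps in auto)
next
  case (bp_step w m)
  from bp_step.prems show ?case
  proof (cases rule: bp_rel.cases)
    case (bp_step m'')
    then show ?thesis using bp_step.IH by simp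
  qed (use bp_step.hyps in auto)
qed

lemma bp_rel_total: "\<exists>m. bp_rel w m"
proof (induction "length w" arbitrary: w rule: less_induct)
  case less
  consider "w = []" | "w \<noteq> []" "unbordered w" | "w \<noteq> []" "\<not> unbordered w" by blast
  then show ?case
  proof cases
    case 3
    with less bp_mid_shorter obtain m where "bp_rel (bp_mid w) m" by blast
    with 3 show ?thesis by (blast intro: bp_step)
  qed (blast intro: bp_rel.intros)+
qed

lemma bp_width_eqI: "bp_rel w m \<Longrightarrow> bp_width w = m"
  unfolding bp_width_def using bp_rel_functional by blast

lemma bp_width_Nil [simp]: "bp_width [] = 0"
  by (intro bp_width_eqI bp_empty)

lemma bp_width_unbordered: "w \<noteq> [] \<Longrightarrow> unbordered w \<Longrightarrow> bp_width w = 1"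
  by (intro bp_width_eqI bp_unb)

lemma bp_width_bordered: "\<not> unbordered w \<Longrightarrow> bp_width w = bp_width (bp_mid w) + 2"
proof -
  assume "\<not> unbordered w"
  moreover from this have "w \<noteq> []" using unbordered_Nil by blast
  moreover obtain m where "bp_rel (bp_mid w) m" using bp_rel_total by blast
  ultimately show ?thesis
    using bp_step bp_width_eqI by metis
qed

lemma bp_width_peel:
  assumes "k \<in> nob_lengths w" "\<And>j. j \<in> nob_lengths w \<Longrightarrow> j \<le> k"
    and "drop k (take (length w - k) w) = v"
  shows "bp_width w = bp_width v + 2"
proof -
  have "\<not> unbordered w"
    using assms(1) unbordered_iff_nob_lengths by blast
  moreover have "bp_mid w = v"
    using lnob_eqI[OF assms(1,2)] assms(3) by (simp add: bp_mid_def)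
  ultimately show ?thesis by (simp add: bp_width_bordered)
qed

definition width_bound :: "nat \<Rightarrow> nat" where
  "width_bound n = 6 * (n div 8) + min (n mod 8) 5"

lemma width_bound_add_mult_8: "width_bound (8 * q + r) = 6 * q + width_bound r"
  by (simp add: width_bound_def)

lemma mod_8_cases:
  fixes n :: nat
  obtains q r where "n = 8 * q + r" "r \<in> {0, 1, 2, 3, 4, 5, 6, 7}"
proof
  show "n = 8 * (n div 8) + n mod 8" by simp
  have "n mod 8 < 8" by simp
  then show "n mod 8 \<in> {0, 1, 2, 3, 4, 5, 6, 7}" by auto
qed

lemma width_bound_Suc: "width_bound n \<le> width_bound (Suc n)"
proof -
  obtain q r where n: "n = 8 * q + r" and r: "r \<in> {0, 1, 2, 3, 4, 5, 6, 7}" by (rule mod_8_cases)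
  from r have "width_bound r \<le> width_bound (Suc r)" by (auto simp: width_bound_def)
  then show ?thesis
    using width_bound_add_mult_8[of q r] width_bound_add_mult_8[of q "Suc r"] by (simp add: n)
qed

lemma width_bound_mono: "m \<le> n \<Longrightarrow> width_bound m \<le> width_bound n"
  by (rule lift_Suc_mono_le[of width_bound]) (use width_bound_Suc in auto)

lemma width_bound_add:
  assumes "t \<le> 2"
  shows "width_bound m + 2 * t + 2 \<le> width_bound (m + 2 * t + 4)"
proof -
  obtain q r where m: "m = 8 * q + r" and r: "r \<in> {0, 1, 2, 3, 4, 5, 6, 7}" by (rule mod_8_cases)
  from assms have "t \<in> {0, 1, 2}" by auto
  with r have "width_bound r + 2 * t + 2 \<le> width_bound (r + 2 * t + 4)"
    by (auto simp: width_bound_def)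
  then show ?thesis
    using width_bound_add_mult_8[of q r] width_bound_add_mult_8[of q "r + 2 * t + 4"]
    by (simp add: m add.assoc)
qed

lemma width_bound_short:
  assumes "t \<le> 2"
  shows "min m 1 + 2 * t \<le> width_bound (m + 2 * t)"
proof (cases "m = 0")
  case True
  with assms show ?thesis by (auto simp: width_bound_def)
next
  case False
  from assms have "1 + 2 * t \<le> width_bound (1 + 2 * t)" by (auto simp: width_bound_def)
  also from False have "\<dots> \<le> width_bound (m + 2 * t)" by (intro width_bound_mono) simp
  finally show ?thesis using False by simp
qed

section \<open>Upper bound for binary words\<close>

(* The conjunct \<not> unbordered w is needed: for unbordered w, lnob w = Max {} is unspecified. *)
definition unit_peel :: "nat list \<Rightarrow> bool" where
  "unit_peel w \<longleftrightarrow> \<not> unbordered w \<and> lnob w = 1"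

lemma unit_peelE:
  assumes "unit_peel w"
  obtains a where "w = a # bp_mid w @ [a]"
proof
  from assms have "w = take 1 w @ bp_mid w @ take 1 w" "w \<noteq> []"
    using bordered_decomp unbordered_Nil unfolding unit_peel_def by metis+
  then show "w = hd w # bp_mid w @ [hd w]"
    by (metis append_Cons append_Nil take_Suc take_0 One_nat_def)
qed

lemma unit_peel_nob_lengths: "unit_peel w \<Longrightarrow> k \<in> nob_lengths w \<Longrightarrow> k \<le> 1"
  unfolding unit_peel_def using le_lnob by fastforce

lemma binary_no_three_unit_peels:
  assumes "set w \<subseteq> {0..<2}" "unit_peel w" "unit_peel (bp_mid w)"
  shows "\<not> unit_peel (bp_mid (bp_mid w))"
proof
  assume "unit_peel (bp_mid (bp_mid w))"
  define y where "y = bp_mid w"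
  define z where "z = bp_mid y"
  obtain a where "w = a # y @ [a]"
    using assms(2) unfolding y_def by (rule unit_peelE)
  moreover obtain b where "y = b # z @ [b]"
    using assms(3) unfolding y_def z_def by (rule unit_peelE)
  moreover obtain c u where "z = c # u @ [c]"
    using \<open>unit_peel (bp_mid (bp_mid w))\<close> unfolding y_def z_def by (rule unit_peelE)
  ultimately have w: "w = a # b # c # u @ [c, b, a]" and y: "y = b # c # u @ [c, b]"
    by simp_all
  have "a < 2" "b < 2" "c < 2"
    using assms(1) by (subst (asm) w; auto)+
  then consider "a = b" | "a = c" | "b = c" by linarith
  then show False
  proof cases
    case 1
    then have "2 \<in> nob_lengths w" by (simp add: w nob_lengths_def)
    then show False using assms(2) unit_peel_nob_lengths by fastforce
  next
    case 2
    then have "3 \<in> nob_lengths w" by (simp add: w nob_lengths_def)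
    then show False using assms(2) unit_peel_nob_lengths by fastforce
  next
    case 3
    then have "2 \<in> nob_lengths y" by (simp add: y nob_lengths_def)
    then show False using assms(3) unit_peel_nob_lengths unfolding y_def by fastforce
  qed
qed

(* t counts the single-letter peels that precede w; there are at most two of them
   by binary_no_three_unit_peels. *)
lemma bp_width_le_width_bound_if_not_unit_peel:
  assumes "\<not> unit_peel w" "t \<le> 2"
    and mid: "\<not> unbordered w \<Longrightarrow> bp_width (bp_mid w) \<le> width_bound (length (bp_mid w))"
  shows "bp_width w + 2 * t \<le> width_bound (length w + 2 * t)"
proof (cases "unbordered w")
  case True
  then have "bp_width w = min (length w) 1"
    by (cases "w = []") (auto simp: bp_width_unbordered Suc_le_eq)
  then show ?thesis
    using width_bound_short[OF assms(2)] by simp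
next
  case False
  then have "2 \<le> lnob w" "2 * lnob w \<le> length w"
    using assms(1) lnob_bounds[of w] by (auto simp: unit_peel_def)
  then have "length (bp_mid w) + 2 * t + 4 \<le> length w + 2 * t"
    using False by (simp add: length_bp_mid)
  moreover have "bp_width w + 2 * t \<le> width_bound (length (bp_mid w)) + 2 * t + 2"
    using False mid by (simp add: bp_width_bordered)
  ultimately show ?thesis
    using width_bound_add[OF assms(2)] width_bound_mono by (meson le_trans)
qed

lemma bp_width_le_width_bound:
  "set w \<subseteq> {0..<2} \<Longrightarrow> bp_width w \<le> width_bound (length w)"
proof (induction "length w" arbitrary: w rule: less_induct)
  case less
  have mid: "bp_width (bp_mid v) \<le> width_bound (length (bp_mid v))"
    if "\<not> unbordered v" "set v \<subseteq> set w" "length v \<le> length w" for v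
    using less that bp_mid_shorter set_bp_mid by (meson order.strict_trans2 order.trans)
  show ?case
  proof (cases "unit_peel w")
    case False
    with mid show ?thesis
      using bp_width_le_width_bound_if_not_unit_peel[of w 0] by simp
  next
    case w: True
    define y where "y = bp_mid w"
    have y: "bp_width w = bp_width y + 2 * 1" "length w = length y + 2 * 1" "set y \<subseteq> set w"
      using w lnob_bounds[of w]
      by (auto simp: unit_peel_def y_def bp_width_bordered length_bp_mid set_bp_mid)
    show ?thesis
    proof (cases "unit_peel y")
      case False
      then have "bp_width y + 2 * 1 \<le> width_bound (length y + 2 * 1)"
        using mid y by (intro bp_width_le_width_bound_if_not_unit_peel) auto
      then show ?thesis unfolding y(1,2) .
    next
      case True
      define z where "z = bp_mid y"
      have z: "bp_width w = bp_width z + 2 * 2" "length w = length z + 2 * 2" "set z \<subseteq> set w"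
        using True y lnob_bounds[of y]
        by (auto simp: unit_peel_def z_def bp_width_bordered length_bp_mid
            dest: set_bp_mid[THEN subset_trans])
      have "\<not> unit_peel z"
        using binary_no_three_unit_peels[OF less.prems w] True by (simp add: y_def z_def)
      then have "bp_width z + 2 * 2 \<le> width_bound (length z + 2 * 2)"
        using mid z by (intro bp_width_le_width_bound_if_not_unit_peel) auto
      then show ?thesis unfolding z(1,2) .
    qed
  qed
qed

section \<open>Binary words attaining the bound\<close>

definition alternating :: "nat list \<Rightarrow> bool" where
  "alternating v \<longleftrightarrow> \<not> sublist [0, 0] v \<and> \<not> sublist [1, 1] v"

lemma not_sublist_if_alternating:
  assumes "alternating v" "sublist [a, a] s" "a < 2"
  shows "\<not> sublist s v"
proof
  assume "sublist s v"
  with assms(2) have "sublist [a, a] v" by (rule sublist_order.order_trans)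
  with assms(1,3) show False
    by (auto simp: alternating_def less_2_cases_iff)
qed

lemma take_half_append:
  assumes "length u = length v"
  shows "take (length (u @ x @ v) div 2) (u @ x @ v) = u @ take (length x div 2) x"
proof -
  have "length (u @ x @ v) div 2 = length u + length x div 2"
    using assms by simp
  then show ?thesis by simp
qed

definition wrap :: "nat list \<Rightarrow> nat list" where
  "wrap x = [0, 1, 0, 1] @ x @ [0, 1, 1, 0]"

(* The first half of x continues the alternating prefix 0101 of wrap x, and x ends in 0.
   This keeps the suffixes 110, 11 and 001 of the three successive peels of wrap x out of
   their first halves, so the peels remove exactly 0, 1 and 01 from each end. *)
definition wrappable :: "nat list \<Rightarrow> bool" where
  "wrappable x \<longleftrightarrow> alternating (1 # take (length x div 2) x) \<and> (x = [] \<or> last x = 0)"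

lemma wrappable_wrap: "wrappable x \<Longrightarrow> wrappable (wrap x)"
  unfolding wrappable_def wrap_def
  by (simp only: take_half_append length_Cons list.size(3))
    (simp add: alternating_def sublist_Cons_right)

lemma bp_width_peel_by_suffix:
  assumes "k \<in> nob_lengths w" "suffix s w" "\<not> sublist s (take (length w div 2) w)"
    and "\<And>j. k < j \<Longrightarrow> j < length s \<Longrightarrow> j \<notin> nob_lengths w"
    and "drop k (take (length w - k) w) = v"
  shows "bp_width w = bp_width v + 2"
proof (rule bp_width_peel[OF assms(1) _ assms(5)])
  fix j assume "j \<in> nob_lengths w"
  with assms(2,3,4) show "j \<le> k"
    using nob_lengths_less_suffix by (meson not_le)
qed

lemma bp_width_wrap_two_unit_peels:
  assumes alt: "alternating (1 # take (length x div 2) x)"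
  shows "bp_width (wrap x) = bp_width ([0, 1] @ x @ [0, 1]) + 4"
proof -
  let ?P = "take (length x div 2) x"
  define y where "y = [1, 0, 1] @ x @ [0, 1, 1]"
  have "bp_width (wrap x) = bp_width y + 2"
  proof (rule bp_width_peel_by_suffix[of 1 _ "[1, 1, 0]"])
    have "take (length (wrap x) div 2) (wrap x) = [0, 1, 0, 1] @ ?P"
      unfolding wrap_def by (rule take_half_append) simp
    with alt show "\<not> sublist [1, 1, 0] (take (length (wrap x) div 2) (wrap x))"
      by (intro not_sublist_if_alternating[of _ 1]) (simp_all add: alternating_def sublist_Cons_right)
    show "suffix [1, 1, 0] (wrap x)"
      unfolding wrap_def suffix_def by (intro exI[of _ "[0, 1, 0, 1] @ x @ [0]"]) simp
    fix j :: nat assume "1 < j" "j < length [1, 1, 0 :: nat]"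
    then have "j = 2" by simp
    then show "j \<notin> nob_lengths (wrap x)" by (simp add: wrap_def nob_lengths_def)
  qed (simp_all add: wrap_def nob_lengths_def y_def)
  also have "bp_width y = bp_width ([0, 1] @ x @ [0, 1]) + 2"
  proof (rule bp_width_peel_by_suffix[of 1 _ "[1, 1]"])
    have "take (length y div 2) y = [1, 0, 1] @ ?P"
      unfolding y_def by (rule take_half_append) simp
    with alt show "\<not> sublist [1, 1] (take (length y div 2) y)"
      by (intro not_sublist_if_alternating[of _ 1]) (simp_all add: alternating_def sublist_Cons_right)
    show "suffix [1, 1] y"
      unfolding y_def suffix_def by (intro exI[of _ "[1, 0, 1] @ x @ [0]"]) simp
  qed (simp_all add: nob_lengths_def y_def)
  finally show ?thesis by simp
qed

lemma bp_width_peel_01: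
  assumes alt: "alternating (1 # take (length x div 2) x)" and last: "x = [] \<or> last x = 0"
  shows "bp_width ([0, 1] @ x @ [0, 1]) = bp_width x + 2"
proof (cases "x = []")
  case True
  then show ?thesis
    by (simp add: bp_width_bordered unbordered_iff_nob_lengths nob_lengths_eq_filter
        bp_mid_def lnob_eq_Max upt_rec)
next
  case False
  with last obtain x' where x': "x = x' @ [0]"
    by (metis append_butlast_last_id)
  define z where "z = [0, 1] @ x @ [0, 1]"
  have "bp_width z = bp_width x + 2"
  proof (rule bp_width_peel_by_suffix[of 2 _ "[0, 0, 1]"])
    have "take (length z div 2) z = [0, 1] @ take (length x div 2) x"
      unfolding z_def by (rule take_half_append) simp
    with alt show "\<not> sublist [0, 0, 1] (take (length z div 2) z)"
      by (intro not_sublist_if_alternating[of _ 0]) (simp_all add: alternating_def sublist_Cons_right)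
    show "suffix [0, 0, 1] z"
      unfolding z_def x' suffix_def by (intro exI[of _ "[0, 1] @ x'"]) simp
  qed (simp_all add: nob_lengths_def z_def)
  then show ?thesis by (simp add: z_def)
qed

lemma bp_width_wrap: "wrappable x \<Longrightarrow> bp_width (wrap x) = bp_width x + 6"
  unfolding wrappable_def using bp_width_wrap_two_unit_peels bp_width_peel_01 by fastforce

lemma wrap_iterate:
  assumes "wrappable x"
  shows "wrappable ((wrap ^^ l) x) \<and> bp_width ((wrap ^^ l) x) = bp_width x + 6 * l"
  using assms by (induction l) (simp_all add: wrappable_wrap bp_width_wrap)

lemma length_wrap_iterate: "length ((wrap ^^ l) x) = length x + 8 * l"
  by (induction l) (simp_all add: wrap_def)

lemma set_wrap_iterate: "set x \<subseteq> {0..<2} \<Longrightarrow> set ((wrap ^^ l) x) \<subseteq> {0..<2}"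
  by (induction l) (simp_all add: wrap_def)

lemma binary_wrappable_seed:
  assumes "r < 8"
  shows "\<exists>x. length x = r \<and> set x \<subseteq> {0..<2} \<and> wrappable x \<and> bp_width x = width_bound r"
proof -
  let ?x = "[[], [0], [0, 0], [0, 1, 0], [0, 1, 1, 0], [0, 1, 0, 1, 0], [0, 1, 0, 1, 1, 0],
             [0, 1, 0, 0, 1, 0, 0]] ! r :: nat list"
  from assms have "r \<in> {0, 1, 2, 3, 4, 5, 6, 7}" by auto
  then have "length ?x = r \<and> set ?x \<subseteq> {0..<2} \<and> wrappable ?x \<and> bp_width ?x = width_bound r"
    by (elim insertE emptyE; simp add: wrappable_def alternating_def sublist_Cons_right
        width_bound_def bp_width_bordered bp_width_unbordered unbordered_iff_nob_lengths
        nob_lengths_eq_filter bp_mid_def lnob_eq_Max upt_rec)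
  then show ?thesis by blast
qed

lemma width_bound_attained:
  "\<exists>w. length w = n \<and> set w \<subseteq> {0..<2} \<and> bp_width w = width_bound n"
proof -
  obtain x where x: "length x = n mod 8" "set x \<subseteq> {0..<2}" "wrappable x"
    "bp_width x = width_bound (n mod 8)"
    using binary_wrappable_seed[of "n mod 8"] by auto
  let ?w = "(wrap ^^ (n div 8)) x"
  have "length ?w = n"
    using x(1) by (simp add: length_wrap_iterate)
  moreover have "set ?w \<subseteq> {0..<2}"
    using x(2) by (rule set_wrap_iterate)
  moreover have "bp_width ?w = width_bound n"
    using wrap_iterate[OF x(3)] x(4) width_bound_add_mult_8[of "n div 8" "n mod 8"] by simp
  ultimately show ?thesis by blast
qed

section \<open>The value of f 2\<close>

lemma f_eqI:
  assumes "\<And>w. length w = n \<Longrightarrow> set w \<subseteq> {0..<k} \<Longrightarrow> bp_width w \<le> m"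
    and "length w = n" "set w \<subseteq> {0..<k}" "bp_width w = m"
  shows "f k n = m"
proof -
  have "{bp_width w | w. length w = n \<and> set w \<subseteq> {0..<k}} =
        bp_width ` {w. set w \<subseteq> {0..<k} \<and> length w = n}"
    by blast
  moreover have "finite {w. set w \<subseteq> {0..<k} \<and> length w = n}"
    by (rule finite_lists_length_eq) simp
  ultimately show ?thesis
    unfolding f_def using assms by (intro Max_eqI) auto
qed

theorem f_2_eq_width_bound: "f 2 n = width_bound n"
  using width_bound_attained bp_width_le_width_bound by (metis f_eqI)

theorem theorem6:
  fixes l :: nat
  shows "(\<forall>i::nat. i \<le> 5 \<longrightarrow> f 2 (8 * l + i) = 6 * l + i)
         \<and> f 2 (8 * l + 6) = 6 * l + 5 \<and> f 2 (8 * l + 7) = 6 * l + 5"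
proof -
  have "f 2 (8 * l + i) = 6 * l + min i 5" if "i < 8" for i
    using that by (simp add: f_2_eq_width_bound width_bound_add_mult_8 width_bound_def)
  then show ?thesis by force
qed

end
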